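(* Let $\Sigma$ be a compact oriented surface with boundary components $\gamma_1,\dots,\gamma_n$ and $\chi(\Sigma)<0$, with a hyperbolic metric $d$ with geodesic boundary, a weight $\mathbf{r}\in\mathbb{R}^n_{>0}$ and a truncated triangulation $\mathcal{T}$. For a truncated hinge $\Diamond_{ij;kl}$ (edge $e_{ij}$ with faces $f_{ijk},f_{ijl}$), put $p=r_k,q=r_i,r=r_l,s=r_j$ and $a=\cosh l_{ki}$, $b=\cosh l_{il}$, $c=\cosh l_{lj}$, $d=\cosh l_{jk}$, $e=\cosh l_{ij}$, where $l_{\alpha\beta}$ is the length coordinate of $[d]$ at $e_{\alpha\beta}$. Then $e_{ij}$ is local weighted Delaunay if and only if \[\frac{\sqrt{\Delta_{bce}}}{p}+\frac{\sqrt{\Delta_{ade}}}{r}\le\frac{\sqrt{\Delta_{cdf}}}{q}+\frac{\sqrt{\Delta_{abf}}}{s},\] where $\Delta_{xyz}=x^2+y^2+z^2+2xyz-1$ and $f=\frac{ab+cd+ace+bde+\sqrt{\Delta_{ade}}\sqrt{\Delta_{bce}}}{e^2-1}$.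
   Context: Gluing open disks $D_i$ to the boundary components $\gamma_i$ and choosing $v_i\in D_i$ gives a marked surface $(S,V)$; a truncated triangulation of $\Sigma$ is the intersection with $\Sigma$ of a triangulation of $(S,V)$ (a $\Delta$-complex decomposition with $0$-cells $V$); each face becomes a truncated triangle (right-angled hexagon after straightening). For each edge, the truncated arc is isotopic to a unique geodesic orthogonal to $\partial\Sigma$, whose length is the length coordinate. For a truncated face $f_{ijk}$, lifted to $\mathbb{H}^2$, $O_{ijk}$ denotes the point satisfying $r_i\sinh d(O_{ijk},\gamma_i)=r_j\sinh d(O_{ijk},\gamma_j)=r_k\sinh d(O_{ijk},\gamma_k)$, and $h_{ij,k}$ is the hyperbolic distance from $O_{ijk}$ to the geodesic edge $e_{ij}$, positive if $O_{ijk}$ lies on the same side of $e_{ij}$ as $f_{ijk}$ and negative otherwise. The edge $e_{ij}$ is local weighted Delaunay if $h_{ij,k}+h_{ij,l}\ge0$. *)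

theory Defs
  imports "HOL-Analysis.Analysis"
begin

text \<open>Hyperboloid model of the hyperbolic plane in Minkowski space R^{2,1}.\<close>

definition mink :: "real^3 \<Rightarrow> real^3 \<Rightarrow> real" where
  "mink x y = x$1 * y$1 + x$2 * y$2 - x$3 * y$3"

definition hyp_plane :: "(real^3) set" where
  "hyp_plane = {x. mink x x = -1 \<and> x$3 > 0}"

definition hdist :: "real^3 \<Rightarrow> real^3 \<Rightarrow> real" where
  "hdist x y = arcosh (- mink x y)"

definition pt_set_dist :: "real^3 \<Rightarrow> (real^3) set \<Rightarrow> real" where
  "pt_set_dist x A = Inf (hdist x ` A)"

definition set_dist :: "(real^3) set \<Rightarrow> (real^3) set \<Rightarrow> real" where
  "set_dist A B = Inf {hdist x y | x y. x \<in> A \<and> y \<in> B}"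

text \<open>A geodesic is given by a unit spacelike normal n; the two open sides
  of it are the open half-planes where mink x n is positive resp. negative.\<close>
definition spacelike_unit :: "real^3 \<Rightarrow> bool" where
  "spacelike_unit n \<longleftrightarrow> mink n n = 1"

definition geod :: "real^3 \<Rightarrow> (real^3) set" where
  "geod n = {x \<in> hyp_plane. mink x n = 0}"

definition half_plane :: "real^3 \<Rightarrow> (real^3) set" where
  "half_plane n = {x \<in> hyp_plane. mink x n > 0}"

definition signed_dist :: "real^3 \<Rightarrow> real^3 \<Rightarrow> real" where
  "signed_dist x n = (if mink x n \<ge> 0 then pt_set_dist x (geod n) else - pt_set_dist x (geod n))"

text \<open>Three boundary geodesics (unit normals pointing into the face) bounding a
  truncated triangle: pairwise disjoint (ultraparallel), none separating the
  other two, the normals pointing to the common region.\<close>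
definition truncated_triangle :: "real^3 \<Rightarrow> real^3 \<Rightarrow> real^3 \<Rightarrow> bool" where
  "truncated_triangle a b c \<longleftrightarrow>
     spacelike_unit a \<and> spacelike_unit b \<and> spacelike_unit c \<and>
     mink a b < -1 \<and> mink b c < -1 \<and> mink a c < -1 \<and>
     half_plane a \<inter> half_plane b \<inter> half_plane c \<noteq> {}"

definition is_face_centre ::
  "real^3 \<Rightarrow> real^3 \<Rightarrow> real^3 \<Rightarrow> real \<Rightarrow> real \<Rightarrow> real \<Rightarrow> real^3 \<Rightarrow> bool" where
  "is_face_centre na nb nc wa wb wc z \<longleftrightarrow>
     z \<in> hyp_plane \<and> mink z na \<ge> 0 \<and> mink z nb \<ge> 0 \<and> mink z nc \<ge> 0 \<and>
     wa * sinh (pt_set_dist z (geod na)) = wb * sinh (pt_set_dist z (geod nb)) \<and>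
     wb * sinh (pt_set_dist z (geod nb)) = wc * sinh (pt_set_dist z (geod nc))"

definition Delta :: "real \<Rightarrow> real \<Rightarrow> real \<Rightarrow> real" where
  "Delta x y z = x^2 + y^2 + z^2 + 2*x*y*z - 1"

end

theory Submission
  imports Defs
begin

text \<open>In the hyperboloid model a boundary geodesic is the orthogonal complement of a spacelike
  unit normal n, the signed distance from z to it is arsinh <z,n>, and ultraparallel geodesics
  with normals n, n' are at distance arcosh (- <n,n'>). Expand the face centre O of f_ijk in the
  frame (ni, nj, m), m the unit normal of e_ij. The centre equations r_x <O,n_x> = t fix the
  ni, nj coordinates of O; then <O,O> = -1 gives t^2 q = 1 + <O,m>^2 with q depending only on
  ri, rj, e, and <O,nk> = t/rk makes <O,m>/t affine in 1/ri, 1/rj, 1/rk, with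
  <nk,m> = - sqrt (Delta a d e / (e^2 - 1)). As q is shared by the two faces,
  h_ij,k + h_ij,l = arsinh <Ok,m> + arsinh <Ol,-m> has the sign of <Ok,m>/t + <Ol,-m>/s,
  and clearing positive denominators yields the inequality; its right-hand coefficients are
  sqrt (Delta c d f) and sqrt (Delta a b f) by a polynomial identity.\<close>

lemma mink_commute: "mink x y = mink y x"
  by (simp add: mink_def algebra_simps)

lemma mink_add_left: "mink (x + y) z = mink x z + mink y z"
  and mink_add_right: "mink z (x + y) = mink z x + mink z y"
  and mink_diff_left: "mink (x - y) z = mink x z - mink y z"
  and mink_diff_right: "mink z (x - y) = mink z x - mink z y"
  and mink_scaleR_left: "mink (c *\<^sub>R x) z = c * mink x z"
  and mink_scaleR_right: "mink z (c *\<^sub>R x) = c * mink z x"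
  and mink_minus_left: "mink (- x) z = - mink x z"
  and mink_minus_right: "mink z (- x) = - mink z x"
  by (simp_all add: mink_def algebra_simps)

lemmas mink_simps = mink_add_left mink_add_right mink_diff_left mink_diff_right
  mink_scaleR_left mink_scaleR_right mink_minus_left mink_minus_right

lemma mink_self_horizontal: "x$3 = 0 \<Longrightarrow> mink x x = (x$1)^2 + (x$2)^2"
  by (simp add: mink_def power2_eq_square)

lemma timelike_third_coord_nonzero:
  assumes "mink x x < 0"
  shows "x$3 \<noteq> 0"
proof
  assume "x$3 = 0"
  then have "mink x x \<ge> 0"
    by (simp add: mink_self_horizontal)
  with assms show False
    by simp
qed

lemma mink_reverse_cauchy_schwarz:
  assumes "mink x x < 0"
  shows "mink x x * mink y y \<le> (mink x y)^2"
proof -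
  define l where "l = - y$3 / x$3"
  define v where "v = y + l *\<^sub>R x"
  have "v$3 = 0"
    using timelike_third_coord_nonzero[OF assms] by (simp add: v_def l_def field_simps)
  then have "mink v v \<ge> 0"
    by (simp add: mink_self_horizontal)
  moreover have "mink v v = mink y y + 2 * l * mink x y + l^2 * mink x x"
    by (simp add: v_def mink_simps mink_commute[of y x] power2_eq_square algebra_simps)
  ultimately have "mink x x * (mink y y + 2 * l * mink x y + l^2 * mink x x) \<le> 0"
    using assms by (simp add: mult_nonpos_nonneg)
  then have "(mink x x * l + mink x y)^2 \<le> (mink x y)^2 - mink x x * mink y y"
    by (simp add: power2_eq_square algebra_simps)
  then show ?thesis
    by (smt (verit) zero_le_power2)
qed

lemma mink_future_timelike_neg:
  assumes x: "mink x x < 0" "x$3 > 0" and y: "mink y y < 0" "y$3 > 0"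
  shows "mink x y < 0"
proof -
  have "((x$1)^2 + (x$2)^2) * ((y$1)^2 + (y$2)^2) - (x$1 * y$1 + x$2 * y$2)^2
      = (x$1 * y$2 - x$2 * y$1)^2"
    by (simp add: power2_eq_square algebra_simps)
  then have "(x$1 * y$1 + x$2 * y$2)^2 \<le> ((x$1)^2 + (x$2)^2) * ((y$1)^2 + (y$2)^2)"
    by (smt (verit) zero_le_power2)
  also have "\<dots> < (x$3)^2 * (y$3)^2"
    using x y by (intro mult_strict_mono') (auto simp: mink_def power2_eq_square)
  finally have "(x$1 * y$1 + x$2 * y$2)^2 < (x$3 * y$3)^2"
    by (simp add: power_mult_distrib)
  then have "x$1 * y$1 + x$2 * y$2 < x$3 * y$3"
    using x(2) y(2) by (smt (verit) mult_pos_pos power2_le_imp_le)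
  then show ?thesis
    by (simp add: mink_def)
qed

lemma future_if_mink_neg_future:
  assumes x: "mink x x < 0" "x$3 > 0" and y: "mink y y < 0" and xy: "mink x y < 0"
  shows "y$3 > 0"
proof (rule ccontr)
  assume "\<not> y$3 > 0"
  with timelike_third_coord_nonzero[OF y] have "(- y)$3 > 0"
    by simp
  then have "mink x (- y) < 0"
    using mink_future_timelike_neg[OF x, of "- y"] y by (simp add: mink_simps)
  with xy show False
    by (simp add: mink_simps)
qed

lemma hyp_plane_mink_neg: "x \<in> hyp_plane \<Longrightarrow> y \<in> hyp_plane \<Longrightarrow> mink x y < 0"
  by (rule mink_future_timelike_neg) (simp_all add: hyp_plane_def)

lemma geodD: "x \<in> geod n \<Longrightarrow> x \<in> hyp_plane \<and> mink x n = 0"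
  by (simp add: geod_def)

definition geod_proj :: "real^3 \<Rightarrow> real^3 \<Rightarrow> real^3" where
  "geod_proj n z = (1 / sqrt (1 + (mink z n)^2)) *\<^sub>R (z - mink z n *\<^sub>R n)"

lemma mink_geod_proj:
  "mink (geod_proj n z) v = (mink z v - mink z n * mink n v) / sqrt (1 + (mink z n)^2)"
  by (simp add: geod_proj_def mink_simps)

lemma geod_proj_in_geod:
  assumes z: "z \<in> hyp_plane" and n: "spacelike_unit n"
  shows "geod_proj n z \<in> geod n"
proof -
  define c where "c = mink z n"
  define w where "w = z - c *\<^sub>R n"
  define k where "k = 1 / sqrt (1 + c^2)"
  have zz: "mink z z = -1" "z$3 > 0"
    using z by (auto simp: hyp_plane_def)
  have ww: "mink w w = -1 - c^2" and zw: "mink z w = -1 - c^2"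
    using n zz by (simp_all add: w_def c_def spacelike_unit_def mink_simps mink_commute[of n z]
        power2_eq_square)
  have c2: "- 1 < c^2"
    using zero_le_power2[of c] by linarith
  then have w3: "w$3 > 0"
    using future_if_mink_neg_future[of z w] zz ww zw by simp
  have proj: "geod_proj n z = k *\<^sub>R w"
    by (simp add: geod_proj_def w_def c_def k_def)
  have "k^2 * (1 + c^2) = 1"
    using c2 by (simp add: k_def power_divide)
  then have "mink (geod_proj n z) (geod_proj n z) = -1"
    by (simp add: proj mink_simps ww power2_eq_square algebra_simps)
  moreover have "(geod_proj n z)$3 > 0"
    using w3 by (simp add: proj k_def add_pos_nonneg)
  moreover have "mink (geod_proj n z) n = 0"
    using n by (simp add: proj w_def c_def spacelike_unit_def mink_simps)
  ultimately show ?thesis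
    by (simp add: geod_def hyp_plane_def)
qed

lemma mink_geod_proj_self:
  assumes z: "z \<in> hyp_plane" and n: "spacelike_unit n"
  shows "mink z (geod_proj n z) = - sqrt (1 + (mink z n)^2)"
proof -
  have "mink z (geod_proj n z) = (-1 - (mink z n)^2) / sqrt (1 + (mink z n)^2)"
    using z by (simp add: mink_commute[of z "geod_proj n z"] mink_geod_proj mink_commute[of n z]
        hyp_plane_def power2_eq_square)
  also have "\<dots> = - ((1 + (mink z n)^2) / sqrt (1 + (mink z n)^2))"
    by (simp add: minus_divide_left)
  also have "\<dots> = - sqrt (1 + (mink z n)^2)"
    by (simp add: real_div_sqrt)
  finally show ?thesis .
qed

lemma mink_geod_lower:
  assumes z: "z \<in> hyp_plane" and n: "spacelike_unit n" and x: "x \<in> geod n"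
  shows "sqrt (1 + (mink z n)^2) \<le> - mink z x"
proof -
  define w where "w = z - mink z n *\<^sub>R n"
  have xx: "mink x x = -1" and xn: "mink x n = 0"
    using x by (auto simp: geod_def hyp_plane_def)
  have ww: "mink w w = -1 - (mink z n)^2"
    using z n by (simp add: w_def hyp_plane_def spacelike_unit_def mink_simps
        mink_commute[of n z] power2_eq_square)
  have "mink w w * mink x x \<le> (mink w x)^2"
    by (rule mink_reverse_cauchy_schwarz) (simp add: ww, smt (verit) zero_le_power2)
  moreover have "mink w x = mink z x"
    using xn by (simp add: w_def mink_simps mink_commute[of n x])
  ultimately have "sqrt (1 + (mink z n)^2) \<le> sqrt ((mink z x)^2)"
    using ww xx by (intro real_sqrt_le_mono) simp
  also have "\<dots> = - mink z x"
    using hyp_plane_mink_neg[OF z geodD[OF x, THEN conjunct1]] by simp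
  finally show ?thesis .
qed

lemma arcosh_sqrt_one_plus_square: "arcosh (sqrt (1 + c^2)) = arsinh \<bar>c\<bar>"
  by (simp add: arcosh_real_def arsinh_real_def add.commute)

lemma arcosh_le_arcosh_real: "1 \<le> (x::real) \<Longrightarrow> x \<le> y \<Longrightarrow> arcosh x \<le> arcosh y"
  using arcosh_less_iff_real[of y x] by linarith

lemma pt_set_dist_geod:
  assumes z: "z \<in> hyp_plane" and n: "spacelike_unit n"
  shows "pt_set_dist z (geod n) = arsinh \<bar>mink z n\<bar>"
proof -
  have "Inf (hdist z ` geod n) = arcosh (sqrt (1 + (mink z n)^2))"
  proof (rule cInf_eq_minimum)
    show "arcosh (sqrt (1 + (mink z n)^2)) \<in> hdist z ` geod n"
      using geod_proj_in_geod[OF z n] mink_geod_proj_self[OF z n]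
      by (force simp: hdist_def)
  next
    fix y
    assume "y \<in> hdist z ` geod n"
    then show "arcosh (sqrt (1 + (mink z n)^2)) \<le> y"
      using mink_geod_lower[OF z n] by (auto simp: hdist_def intro!: arcosh_le_arcosh_real)
  qed
  then show ?thesis
    by (simp add: pt_set_dist_def arcosh_sqrt_one_plus_square)
qed

lemma signed_dist_geod:
  "z \<in> hyp_plane \<Longrightarrow> spacelike_unit n \<Longrightarrow> signed_dist z n = arsinh (mink z n)"
  by (simp add: signed_dist_def pt_set_dist_geod abs_if)

lemma sinh_pt_set_dist_geod:
  "z \<in> hyp_plane \<Longrightarrow> spacelike_unit n \<Longrightarrow> mink z n \<ge> 0
    \<Longrightarrow> sinh (pt_set_dist z (geod n)) = mink z n"
  by (simp add: pt_set_dist_geod)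

lemma geod_perp_foot:
  assumes n1: "spacelike_unit n1" and n2: "spacelike_unit n2"
    and E: "mink n1 n2 = - E" "E > 1"
  obtains k where "k^2 * (E^2 - 1) = 1" "k *\<^sub>R (n2 + E *\<^sub>R n1) \<in> geod n1"
proof -
  define u where "u = n2 + E *\<^sub>R n1"
  have E2: "E^2 - 1 > 0"
    using E(2) by (simp add: power2_eq_square less_1_mult)
  have uu: "mink u u = 1 - E^2"
    using n1 n2 E(1) by (simp add: u_def spacelike_unit_def mink_simps mink_commute[of n2 n1]
        power2_eq_square algebra_simps)
  have un: "mink u n1 = 0"
    using n1 E(1) by (simp add: u_def spacelike_unit_def mink_simps mink_commute[of n2 n1])
  have "u$3 \<noteq> 0"
    using E2 uu by (intro timelike_third_coord_nonzero) simp
  define k where "k = sgn (u$3) / sqrt (E^2 - 1)"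
  have k2: "k^2 * (E^2 - 1) = 1"
    using E2 \<open>u$3 \<noteq> 0\<close> by (simp add: k_def power_divide sgn_if)
  then have "mink (k *\<^sub>R u) (k *\<^sub>R u) = -1"
    by (simp add: mink_simps uu power2_eq_square algebra_simps)
  moreover have "(k *\<^sub>R u)$3 > 0"
    using E2 \<open>u$3 \<noteq> 0\<close> by (simp add: k_def sgn_if zero_less_mult_iff mult_less_0_iff)
  ultimately have "k *\<^sub>R u \<in> geod n1"
    by (simp add: geod_def hyp_plane_def mink_simps un)
  with k2 show ?thesis
    using that by (simp add: u_def)
qed

lemma mink_geod_geod_lower:
  assumes n1: "spacelike_unit n1" and n2: "spacelike_unit n2" and E: "mink n1 n2 < -1"
    and x: "x \<in> geod n1" and y: "y \<in> geod n2"
  shows "- mink n1 n2 \<le> - mink x y"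
proof -
  define E where "E = - mink n1 n2"
  define w where "w = n1 + E *\<^sub>R n2"
  have yy: "mink y y = -1" and yn: "mink y n2 = 0"
    using y by (auto simp: geod_def hyp_plane_def)
  have E1: "E > 1"
    using E by (simp add: E_def)
  have ww: "mink w w = 1 - E^2"
    using n1 n2 by (simp add: w_def E_def spacelike_unit_def mink_simps mink_commute[of n2 n1]
        power2_eq_square algebra_simps)
  have "mink w w < 0"
    using E1 by (simp add: ww power2_eq_square less_1_mult)
  then have "mink w w * mink y y \<le> (mink w y)^2"
    by (rule mink_reverse_cauchy_schwarz)
  moreover have "mink w y = mink y n1"
    using yn by (simp add: w_def mink_simps mink_commute[of n2 y] mink_commute[of n1 y])
  ultimately have "sqrt (E^2) \<le> sqrt (1 + (mink y n1)^2)"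
    using ww yy by (intro real_sqrt_le_mono) simp
  also have "\<dots> \<le> - mink y x"
    using mink_geod_lower[OF geodD[OF y, THEN conjunct1] n1 x] .
  finally show ?thesis
    using E1 by (simp add: E_def mink_commute[of y x])
qed

lemma cosh_set_dist_geod:
  assumes n1: "spacelike_unit n1" and n2: "spacelike_unit n2" and E: "mink n1 n2 < -1"
  shows "cosh (set_dist (geod n1) (geod n2)) = - mink n1 n2"
proof -
  define E where "E = - mink n1 n2"
  have E1: "E > 1"
    using E by (simp add: E_def)
  have "mink n1 n2 = - E" "mink n2 n1 = - E"
    by (simp_all add: E_def mink_commute[of n2 n1])
  obtain k1 where k1: "k1^2 * (E^2 - 1) = 1" "k1 *\<^sub>R (n2 + E *\<^sub>R n1) \<in> geod n1"
    using geod_perp_foot[OF n1 n2 \<open>mink n1 n2 = - E\<close> E1] .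
  obtain k2 where k2: "k2^2 * (E^2 - 1) = 1" "k2 *\<^sub>R (n1 + E *\<^sub>R n2) \<in> geod n2"
    using geod_perp_foot[OF n2 n1 \<open>mink n2 n1 = - E\<close> E1] .
  define x where "x = k1 *\<^sub>R (n2 + E *\<^sub>R n1)"
  define y where "y = k2 *\<^sub>R (n1 + E *\<^sub>R n2)"
  have x: "x \<in> geod n1" and y: "y \<in> geod n2"
    using k1(2) k2(2) by (simp_all add: x_def y_def)
  have "mink x y = k1 * k2 * E * (1 - E^2)"
    using n1 n2 by (simp add: x_def y_def E_def spacelike_unit_def mink_simps
        mink_commute[of n2 n1] power2_eq_square algebra_simps)
  then have "(mink x y)^2 = (k1^2 * (E^2 - 1)) * (k2^2 * (E^2 - 1)) * E^2"
    by algebra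
  then have "(mink x y)^2 = E^2"
    using k1(1) k2(1) by simp
  moreover have "mink x y < 0"
    using hyp_plane_mink_neg geodD[OF x] geodD[OF y] by blast
  ultimately have xy: "- mink x y = E"
    using E1 power2_eq_iff[of "mink x y" E] by auto
  have "set_dist (geod n1) (geod n2) = arcosh E"
    unfolding set_dist_def
  proof (rule cInf_eq_minimum)
    have "arcosh E = hdist x y"
      by (simp add: hdist_def xy)
    then show "arcosh E \<in> {hdist x y |x y. x \<in> geod n1 \<and> y \<in> geod n2}"
      using x y by blast
  next
    fix v
    assume "v \<in> {hdist x y |x y. x \<in> geod n1 \<and> y \<in> geod n2}"
    then obtain x y where "x \<in> geod n1" "y \<in> geod n2" "v = hdist x y"
      by blast
    then show "arcosh E \<le> v"
      using mink_geod_geod_lower[OF n1 n2 E] E1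
      by (simp add: hdist_def E_def arcosh_le_arcosh_real)
  qed
  then show ?thesis
    using E1 by (simp add: E_def)
qed

lemma is_face_centreD:
  assumes "is_face_centre na nb nc wa wb wc z" and "truncated_triangle na nb nc"
  shows "z \<in> hyp_plane" "mink z na \<ge> 0"
    "wa * mink z na = wb * mink z nb" "wb * mink z nb = wc * mink z nc"
  using assms by (auto simp: is_face_centre_def truncated_triangle_def sinh_pt_set_dist_geod)

locale geodesic_frame =
  fixes ni nj m :: "real^3" and e :: real
  assumes unit_i: "spacelike_unit ni" and unit_j: "spacelike_unit nj"
    and unit_m: "spacelike_unit m"
    and mink_ij: "mink ni nj = - e" and e_gt_1: "e > 1"
    and perp_i: "mink m ni = 0" and perp_j: "mink m nj = 0"
begin

lemma e_square_gt_1: "e^2 - 1 > 0"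
  using e_gt_1 by (simp add: power2_eq_square less_1_mult)

text \<open>The Gram matrix of (ni, nj, m) is [[1,-e,0],[-e,1,0],[0,0,1]]; inverting it expresses
  the Minkowski form through the frame coordinates.\<close>
lemma mink_frame_expansion:
  "(e^2 - 1) * mink x y = (e^2 - 1) * mink x m * mink y m
     - (mink x ni * mink y ni + e * mink x ni * mink y nj + e * mink x nj * mink y ni
        + mink x nj * mink y nj)"
  using unit_i unit_j unit_m mink_ij perp_i perp_j
  unfolding spacelike_unit_def mink_def by algebra

lemma hyp_plane_frame_coords:
  assumes "z \<in> hyp_plane"
  shows "(mink z ni)^2 + 2 * e * mink z ni * mink z nj + (mink z nj)^2
    = (e^2 - 1) * (1 + (mink z m)^2)"
  using mink_frame_expansion[of z z] assms unfolding hyp_plane_def by algebra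

lemma spacelike_unit_frame_coords:
  assumes "spacelike_unit n"
  shows "(e^2 - 1) * (mink n m)^2 = Delta (- mink n ni) (- mink n nj) e"
  using mink_frame_expansion[of n n] assms unfolding spacelike_unit_def Delta_def by algebra

text \<open>Project a point of the face to geod m and then to geod nk; the second foot lies on
  the m side exactly when <nk,m> < 0.\<close>
lemma mink_third_normal_m_neg:
  assumes tri: "truncated_triangle ni nj nk" and side: "geod nk \<subseteq> half_plane m"
  shows "mink nk m < 0"
proof -
  obtain z0 where z0: "z0 \<in> half_plane ni" "z0 \<in> half_plane nj" "z0 \<in> half_plane nk"
    using tri by (auto simp: truncated_triangle_def)
  have z0h: "z0 \<in> hyp_plane"
    using z0 by (simp add: half_plane_def)
  define z where "z = geod_proj m z0"
  have z: "z \<in> hyp_plane" "mink z m = 0"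
    using geodD[OF geod_proj_in_geod[OF z0h unit_m]] by (simp_all add: z_def)
  have sqrt_pos: "sqrt (1 + (mink z0 m)^2) > 0"
    by (simp add: add_pos_nonneg)
  have pos: "mink z ni > 0" "mink z nj > 0"
    using z0 sqrt_pos perp_i perp_j by (simp_all add: z_def mink_geod_proj half_plane_def)
  define a d where "a = - mink nk ni" and "d = - mink nk nj"
  have "a > 1" "d > 1"
    using tri by (simp_all add: a_def d_def truncated_triangle_def mink_commute[of nk ni]
        mink_commute[of nk nj])
  moreover have "(e^2 - 1) * mink z nk = mink z ni * (a + e * d) + mink z nj * (e * a + d)"
    using mink_frame_expansion[of z nk] z(2) by (simp add: a_def d_def algebra_simps)
  ultimately have "(e^2 - 1) * mink z nk > 0"
    using e_gt_1 pos by (simp add: add_pos_pos mult_pos_pos)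
  then have znk: "mink z nk > 0"
    using e_square_gt_1 by (simp add: zero_less_mult_iff)
  have unit_k: "spacelike_unit nk"
    using tri by (simp add: truncated_triangle_def)
  have "geod_proj nk z \<in> half_plane m"
    using side geod_proj_in_geod[OF z(1) unit_k] by blast
  then have "- (mink z nk * mink nk m) / sqrt (1 + (mink z nk)^2) > 0"
    using z(2) by (simp add: half_plane_def mink_geod_proj)
  moreover have "sqrt (1 + (mink z nk)^2) > 0"
    by (simp add: add_pos_nonneg)
  ultimately have "mink z nk * mink nk m < 0"
    by (simp add: divide_less_0_iff)
  with znk show ?thesis
    by (simp add: mult_less_0_iff)
qed

lemma sqrt_Delta_third_normal:
  assumes tri: "truncated_triangle ni nj nk" and side: "geod nk \<subseteq> half_plane m"
  shows "sqrt (Delta (- mink nk ni) (- mink nk nj) e) = - sqrt (e^2 - 1) * mink nk m"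
proof -
  have "Delta (- mink nk ni) (- mink nk nj) e = (sqrt (e^2 - 1) * mink nk m)^2"
    using spacelike_unit_frame_coords[of nk] tri e_square_gt_1
    by (simp add: truncated_triangle_def power_mult_distrib)
  then show ?thesis
    using mink_third_normal_m_neg[OF tri side] e_square_gt_1 by (simp add: abs_mult)
qed

lemma Delta_third_normal_pos:
  assumes tri: "truncated_triangle ni nj nk" and side: "geod nk \<subseteq> half_plane m"
    and a: "a = - mink nk ni" and d: "d = - mink nk nj"
  shows "Delta a d e > 0"
proof -
  have "sqrt (Delta a d e) > 0"
    using sqrt_Delta_third_normal[OF tri side] mink_third_normal_m_neg[OF tri side] e_square_gt_1
    by (simp add: a d mult_pos_neg)
  then show ?thesis
    by simp
qed

lemma face_centre_frame_coords:
  assumes tri: "truncated_triangle ni nj nk" and side: "geod nk \<subseteq> half_plane m"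
    and weights: "ri > 0" "rj > 0" "rk > 0"
    and centre: "is_face_centre ni nj nk ri rj rk z"
    and a: "a = - mink nk ni" and d: "d = - mink nk nj"
  shows "\<exists>t>0. t^2 * (1/ri^2 + 2*e/(ri*rj) + 1/rj^2) = (e^2 - 1) * (1 + (mink z m)^2)
    \<and> sqrt (e^2 - 1) * mink z m * sqrt (Delta a d e)
        = t * ((a + e*d)/ri + (e*a + d)/rj - (e^2 - 1)/rk)"
proof (intro exI conjI)
  note z = is_face_centreD[OF centre tri]
  define t where "t = ri * mink z ni"
  have coords: "mink z ni = t/ri" "mink z nj = t/rj" "mink z nk = t/rk"
    using z(3,4) weights by (simp_all add: t_def field_simps)
  show radius: "t^2 * (1/ri^2 + 2*e/(ri*rj) + 1/rj^2) = (e^2 - 1) * (1 + (mink z m)^2)"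
    using hyp_plane_frame_coords[OF z(1)] weights
    by (simp add: coords power_divide field_simps power2_eq_square)
  have "t \<noteq> 0"
  proof
    assume "t = 0"
    with radius have "(e^2 - 1) * (1 + (mink z m)^2) = 0"
      by simp
    moreover have "1 + (mink z m)^2 > 0"
      by (simp add: add_pos_nonneg)
    ultimately show False
      using e_square_gt_1 by simp
  qed
  then show "t > 0"
    using z(2) weights by (simp add: t_def)
  have "(e^2 - 1) * (t/rk) = (e^2 - 1) * mink z m * mink nk m + t/ri * (a + e*d) + t/rj * (e*a + d)"
    using mink_frame_expansion[of z nk] by (simp add: a d coords algebra_simps)
  then show "sqrt (e^2 - 1) * mink z m * sqrt (Delta a d e)
      = t * ((a + e*d)/ri + (e*a + d)/rj - (e^2 - 1)/rk)"
    using sqrt_Delta_third_normal[OF tri side] e_square_gt_1 by (simp add: a d field_simps)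
qed

end

lemma arsinh_add_nonneg_iff:
  fixes t s q \<mu> \<nu> :: real
  assumes "t > 0" "s > 0" "t^2 * q = 1 + \<mu>^2" "s^2 * q = 1 + \<nu>^2"
  shows "0 \<le> arsinh \<mu> + arsinh \<nu> \<longleftrightarrow> 0 \<le> \<mu> / t + \<nu> / s"
proof -
  have "t^2 * q > 0"
    using assms(3) by (simp add: add_pos_nonneg)
  then have q: "q > 0"
    by (simp add: zero_less_mult_iff)
  have cosh_arsinh: "sqrt (1 + \<mu>^2) = t * sqrt q" "sqrt (1 + \<nu>^2) = s * sqrt q"
    using assms q by (simp_all add: real_sqrt_mult flip: assms(3,4))
  have "0 \<le> arsinh \<mu> + arsinh \<nu> \<longleftrightarrow> 0 \<le> sinh (arsinh \<mu> + arsinh \<nu>)"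
    by simp
  also have "sinh (arsinh \<mu> + arsinh \<nu>) = \<mu> * sqrt (1 + \<nu>^2) + sqrt (1 + \<mu>^2) * \<nu>"
    by (simp add: sinh_add cosh_arsinh_real add.commute)
  also have "\<dots> = (sqrt q * t * s) * (\<mu> / t + \<nu> / s)"
    using assms(1,2) by (simp add: cosh_arsinh field_simps)
  also have "0 \<le> (sqrt q * t * s) * (\<mu> / t + \<nu> / s) \<longleftrightarrow> 0 \<le> \<mu> / t + \<nu> / s"
    using mult_le_cancel_left_pos[of "sqrt q * t * s" 0] q assms(1,2) by simp
  finally show ?thesis .
qed

text \<open>Geometrically f = - <nk,nl>, the cosh of the length of the other diagonal of the hinge.\<close>
lemma sqrt_Delta_diagonal:
  fixes a b c d e f :: real
  assumes e: "e > 1" and nonneg: "a \<ge> 0" "b \<ge> 0" "c \<ge> 0" "d \<ge> 0"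
    and Delta: "Delta a d e \<ge> 0" "Delta b c e \<ge> 0"
    and f: "f = (a*b + c*d + a*c*e + b*d*e + sqrt (Delta a d e) * sqrt (Delta b c e)) / (e^2 - 1)"
  shows "sqrt (Delta c d f)
      = ((a + e*d) * sqrt (Delta b c e) + (b + e*c) * sqrt (Delta a d e)) / (e^2 - 1)"
    and "sqrt (Delta a b f)
      = ((e*a + d) * sqrt (Delta b c e) + (e*b + c) * sqrt (Delta a d e)) / (e^2 - 1)"
proof -
  define U V where "U = sqrt (Delta a d e)" and "V = sqrt (Delta b c e)"
  have UV: "U^2 = Delta a d e" "V^2 = Delta b c e" "U \<ge> 0" "V \<ge> 0"
    using Delta by (simp_all add: U_def V_def)
  have E: "e^2 - 1 > 0"
    using e by (simp add: power2_eq_square less_1_mult)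
  then have "e^2 \<noteq> 1"
    by simp
  have f': "f * (e^2 - 1) = a*b + c*d + a*c*e + b*d*e + U * V"
    using f E by (simp add: U_def V_def)
  have "Delta c d f * (e^2 - 1)^2 = ((a + e*d) * V + (b + e*c) * U)^2"
    using UV(1,2) f' unfolding Delta_def by algebra
  then show "sqrt (Delta c d f)
      = ((a + e*d) * sqrt (Delta b c e) + (b + e*c) * sqrt (Delta a d e)) / (e^2 - 1)"
    using E \<open>e^2 \<noteq> 1\<close> nonneg UV(3,4) e
    by (intro real_sqrt_unique) (simp_all add: U_def V_def power_divide divide_eq_eq)
  have "Delta a b f * (e^2 - 1)^2 = ((e*a + d) * V + (e*b + c) * U)^2"
    using UV(1,2) f' unfolding Delta_def by algebra
  then show "sqrt (Delta a b f)
      = ((e*a + d) * sqrt (Delta b c e) + (e*b + c) * sqrt (Delta a d e)) / (e^2 - 1)"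
    using E \<open>e^2 \<noteq> 1\<close> nonneg UV(3,4) e
    by (intro real_sqrt_unique) (simp_all add: U_def V_def power_divide divide_eq_eq)
qed

lemma weighted_delaunay_iff:
  fixes a b c d e f ri rj rk rl \<mu> \<nu> W :: real
  assumes e: "e > 1" and nonneg: "a \<ge> 0" "b \<ge> 0" "c \<ge> 0" "d \<ge> 0"
    and weights: "ri > 0" "rj > 0" "rk > 0" "rl > 0"
    and face_k: "\<exists>t>0. t^2 * W = (e^2 - 1) * (1 + \<mu>^2)
      \<and> sqrt (e^2 - 1) * \<mu> * sqrt (Delta a d e)
          = t * ((a + e*d)/ri + (e*a + d)/rj - (e^2 - 1)/rk)"
    and face_l: "\<exists>s>0. s^2 * W = (e^2 - 1) * (1 + \<nu>^2)
      \<and> sqrt (e^2 - 1) * \<nu> * sqrt (Delta b c e)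
          = s * ((b + e*c)/ri + (e*b + c)/rj - (e^2 - 1)/rl)"
    and Delta: "Delta a d e > 0" "Delta b c e > 0"
    and f: "f = (a*b + c*d + a*c*e + b*d*e + sqrt (Delta a d e) * sqrt (Delta b c e)) / (e^2 - 1)"
  shows "0 \<le> arsinh \<mu> + arsinh \<nu> \<longleftrightarrow>
    sqrt (Delta b c e) / rk + sqrt (Delta a d e) / rl
      \<le> sqrt (Delta c d f) / ri + sqrt (Delta a b f) / rj"
proof -
  obtain t where t: "t > 0" "t^2 * W = (e^2 - 1) * (1 + \<mu>^2)"
    "sqrt (e^2 - 1) * \<mu> * sqrt (Delta a d e) = t * ((a + e*d)/ri + (e*a + d)/rj - (e^2 - 1)/rk)"
    using face_k by blast
  obtain s where s: "s > 0" "s^2 * W = (e^2 - 1) * (1 + \<nu>^2)"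
    "sqrt (e^2 - 1) * \<nu> * sqrt (Delta b c e) = s * ((b + e*c)/ri + (e*b + c)/rj - (e^2 - 1)/rl)"
    using face_l by blast
  define U V S where "U = sqrt (Delta a d e)" and "V = sqrt (Delta b c e)" and "S = sqrt (e^2 - 1)"
  define P Q where "P = (a + e*d)/ri + (e*a + d)/rj - (e^2 - 1)/rk"
    and "Q = (b + e*c)/ri + (e*b + c)/rj - (e^2 - 1)/rl"
  have E: "e^2 - 1 > 0"
    using e by (simp add: power2_eq_square less_1_mult)
  have pos: "U > 0" "V > 0" "S > 0"
    using Delta E by (simp_all add: U_def V_def S_def)
  have "t^2 * (W / (e^2 - 1)) = 1 + \<mu>^2" "s^2 * (W / (e^2 - 1)) = 1 + \<nu>^2"
    using t(2) s(2) E by (simp_all add: field_simps)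
  then have "0 \<le> arsinh \<mu> + arsinh \<nu> \<longleftrightarrow> 0 \<le> \<mu> / t + \<nu> / s"
    by (rule arsinh_add_nonneg_iff[OF t(1) s(1)])
  also have "\<mu> / t + \<nu> / s = (V * P + U * Q) / (S * U * V)"
  proof -
    have "\<mu> / t = P / (S * U)" "\<nu> / s = Q / (S * V)"
      using t(1,3) s(1,3) pos by (simp_all add: U_def V_def S_def P_def Q_def field_simps)
    then show ?thesis
      using pos by (simp only:) (simp add: field_simps)
  qed
  also have "0 \<le> (V * P + U * Q) / (S * U * V) \<longleftrightarrow> 0 \<le> V * P + U * Q"
    using pos by (simp add: zero_le_divide_iff mult_le_0_iff)
  also have "V * P + U * Q
    = (e^2 - 1) * (sqrt (Delta c d f) / ri + sqrt (Delta a b f) / rj - V / rk - U / rl)"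
    using sqrt_Delta_diagonal[OF e nonneg Delta[THEN less_imp_le] f] E weights
    by (simp add: U_def V_def P_def Q_def field_simps)
  also have "0 \<le> \<dots> \<longleftrightarrow> V / rk + U / rl \<le> sqrt (Delta c d f) / ri + sqrt (Delta a b f) / rj"
    using E by (simp add: zero_le_mult_iff, linarith)
  finally show ?thesis
    by (simp add: U_def V_def)
qed

theorem lemma4p9:
  fixes ni nj nk nl m Ok Ol :: "real^3"
    and ri rj rk rl :: real
  assumes tri_k: "truncated_triangle ni nj nk"
    and tri_l: "truncated_triangle ni nj nl"
    and m_unit: "spacelike_unit m"
    and m_perp: "mink m ni = 0" "mink m nj = 0"
    and k_side: "geod nk \<subseteq> half_plane m"
    and l_side: "geod nl \<subseteq> half_plane (- m)"
    and weights: "ri > 0" "rj > 0" "rk > 0" "rl > 0"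
    and Ok: "is_face_centre ni nj nk ri rj rk Ok"
    and Ol: "is_face_centre ni nj nl ri rj rl Ol"
  shows
    "(let p = rk; q = ri; r = rl; s = rj;
          a = cosh (set_dist (geod nk) (geod ni));
          b = cosh (set_dist (geod ni) (geod nl));
          c = cosh (set_dist (geod nl) (geod nj));
          d = cosh (set_dist (geod nj) (geod nk));
          e = cosh (set_dist (geod ni) (geod nj));
          f = (a*b + c*d + a*c*e + b*d*e + sqrt (Delta a d e) * sqrt (Delta b c e)) / (e^2 - 1)
      in signed_dist Ok m + signed_dist Ol (- m) \<ge> 0 \<longleftrightarrow>
         sqrt (Delta b c e) / p + sqrt (Delta a d e) / r
           \<le> sqrt (Delta c d f) / q + sqrt (Delta a b f) / s)"
proof -
  have units: "spacelike_unit ni" "spacelike_unit nj" "spacelike_unit nk" "spacelike_unit nl"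
    "spacelike_unit (- m)"
    using tri_k tri_l m_unit by (auto simp: truncated_triangle_def spacelike_unit_def mink_simps)
  have ultraparallel: "mink nk ni < -1" "mink ni nl < -1" "mink nl nj < -1" "mink nj nk < -1"
    "mink ni nj < -1"
    using tri_k tri_l
    by (auto simp: truncated_triangle_def mink_commute[of nk ni] mink_commute[of nl nj])
  define a b c d e where "a = cosh (set_dist (geod nk) (geod ni))"
    and "b = cosh (set_dist (geod ni) (geod nl))" and "c = cosh (set_dist (geod nl) (geod nj))"
    and "d = cosh (set_dist (geod nj) (geod nk))" and "e = cosh (set_dist (geod ni) (geod nj))"
  have cosh: "a = - mink nk ni" "b = - mink nl ni" "c = - mink nl nj" "d = - mink nk nj"
    "e = - mink ni nj"
    using ultraparallel units
    by (simp_all add: a_def b_def c_def d_def e_def cosh_set_dist_geod mink_commute[of ni nl]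
        mink_commute[of nj nk])
  interpret k: geodesic_frame ni nj m e
    using units m_unit m_perp ultraparallel by unfold_locales (simp_all add: cosh)
  interpret l: geodesic_frame ni nj "- m" e
    using units m_perp ultraparallel by unfold_locales (simp_all add: cosh mink_simps)
  have "signed_dist Ok m = arsinh (mink Ok m)" "signed_dist Ol (- m) = arsinh (mink Ol (- m))"
    using is_face_centreD(1)[OF Ok tri_k] is_face_centreD(1)[OF Ol tri_l] units m_unit
    by (simp_all add: signed_dist_geod)
  moreover have "a \<ge> 0" "b \<ge> 0" "c \<ge> 0" "d \<ge> 0" "e > 1"
    using ultraparallel by (simp_all add: a_def b_def c_def d_def cosh(5))
  ultimately show ?thesis
    unfolding Let_def a_def[symmetric] b_def[symmetric] c_def[symmetric] d_def[symmetric]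
      e_def[symmetric]
    using weighted_delaunay_iff[OF _ _ _ _ _ weights
        k.face_centre_frame_coords[OF tri_k k_side weights(1-3) Ok cosh(1,4)]
        l.face_centre_frame_coords[OF tri_l l_side weights(1,2,4) Ol cosh(2,3)]
        k.Delta_third_normal_pos[OF tri_k k_side cosh(1,4)]
        l.Delta_third_normal_pos[OF tri_l l_side cosh(2,3)] refl]
    by simp
qed

end
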